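(* On finite open graphs, the relation $\preceq$ is a well-founded, confluent partial order up to graph isomorphism. That is: (i) $G \preceq G$; if $K \preceq H$ and $H \preceq G$ then $K \preceq G$; if $H \preceq G$ and $G \preceq H$ then $G \cong H$; (ii) there is no infinite sequence $G_0 \succ G_1 \succ G_2 \succ \cdots$ in which each $G_{i+1} \preceq G_i$ with $G_{i+1} \not\cong G_i$; (iii) if $H_1 \preceq G$ and $H_2 \preceq G$, then there is an open graph $K$ with $K \preceq H_1$ and $K \preceq H_2$.
   Context: A pre-open graph $G$ consists of a set $E_G$ of edges, two disjoint sets $V_G$ (vertices) and $\epsilon_G$ (edge points), and two maps $s_G, t_G : E_G \to V_G \sqcup \epsilon_G$ (source and target). A morphism $f: G \to H$ of pre-open graphs consists of a map $E_G \to E_H$ and a map $V_G \sqcup \epsilon_G \to V_H \sqcup \epsilon_H$ sending $V_G$ into $V_H$ and $\epsilon_G$ into $\epsilon_H$, commuting with sources and targets. A pre-open graph is an open graph if the restriction of $s_G$ to $s_G^{-1}(\epsilon_G)$ and the restriction of $t_G$ to $t_G^{-1}(\epsilon_G)$ are injective (so each edge point has at most one incoming and at most one outgoing edge). It is finite if $E_G, V_G, \epsilon_G$ are finite. Contraction: given an edge point $p$ with an in-edge $e_1$ from $x_1$ to $p$ and an out-edge $e_2 \neq e_1$ from $p$ to $x_2$ (where $x_1,x_2 \in V_G \sqcup \epsilon_G$ need not be distinct), one may replace $e_1, p, e_2$ by a single new edge $e_3$ from $x_1$ to $x_2$. We say $G$ contracts to $H$, written $H \preceq G$, if $H$ is isomorphic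 to a graph obtained from $G$ by performing any number (possibly zero) of such replacements. *)

theory Defs
  imports Main
begin

record ('e, 'v) pgraph =
  edges :: "'e set"
  verts :: "'v set"
  epts  :: "'v set"
  src   :: "'e \<Rightarrow> 'v"
  tgt   :: "'e \<Rightarrow> 'v"

definition nodes :: "('e, 'v) pgraph \<Rightarrow> 'v set" where
  "nodes G = verts G \<union> epts G"

definition pre_open_graph :: "('e, 'v) pgraph \<Rightarrow> bool" where
  "pre_open_graph G \<longleftrightarrow> verts G \<inter> epts G = {}
     \<and> (\<forall>e\<in>edges G. src G e \<in> nodes G \<and> tgt G e \<in> nodes G)"

definition open_graph :: "('e, 'v) pgraph \<Rightarrow> bool" where
  "open_graph G \<longleftrightarrow> pre_open_graph G
     \<and> inj_on (src G) {e\<in>edges G. src G e \<in> epts G}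
     \<and> inj_on (tgt G) {e\<in>edges G. tgt G e \<in> epts G}"

definition finite_graph :: "('e, 'v) pgraph \<Rightarrow> bool" where
  "finite_graph G \<longleftrightarrow> finite (edges G) \<and> finite (verts G) \<and> finite (epts G)"

definition graph_iso :: "('e, 'v) pgraph \<Rightarrow> ('e, 'v) pgraph \<Rightarrow> bool" where
  "graph_iso G H \<longleftrightarrow> (\<exists>fE fN.
     bij_betw fE (edges G) (edges H) \<and> bij_betw fN (nodes G) (nodes H)
     \<and> fN ` verts G \<subseteq> verts H \<and> fN ` epts G \<subseteq> epts H
     \<and> (\<forall>e\<in>edges G. fN (src G e) = src H (fE e) \<and> fN (tgt G e) = tgt H (fE e)))"

definition contract_step :: "('e, 'v) pgraph \<Rightarrow> ('e, 'v) pgraph \<Rightarrow> bool" where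
  "contract_step G G' \<longleftrightarrow> (\<exists>p e1 e2 e3.
     p \<in> epts G \<and> e1 \<in> edges G \<and> e2 \<in> edges G \<and> e1 \<noteq> e2
     \<and> tgt G e1 = p \<and> src G e2 = p
     \<and> e3 \<notin> edges G - {e1, e2}
     \<and> G' = \<lparr> edges = (edges G - {e1, e2}) \<union> {e3},
              verts = verts G,
              epts = epts G - {p},
              src = (src G)(e3 := src G e1),
              tgt = (tgt G)(e3 := tgt G e2) \<rparr>)"

definition contracts_to :: "('e, 'v) pgraph \<Rightarrow> ('e, 'v) pgraph \<Rightarrow> bool" (infix "\<preceq>\<^sub>c" 50) where
  "H \<preceq>\<^sub>c G \<longleftrightarrow> (\<exists>G'. contract_step\<^sup>*\<^sup>* G G' \<and> graph_iso H G')"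

definition fin_open_graph :: "('e, 'v) pgraph \<Rightarrow> bool" where
  "fin_open_graph G \<longleftrightarrow> open_graph G \<and> finite_graph G"

end

theory Submission
  imports Defs
begin

text \<open>Each contraction removes exactly one edge, so the number of edges strictly decreases along
  contractions and is invariant under isomorphism; this gives antisymmetry up to isomorphism and
  well-foundedness. Isomorphisms transport contractions, which gives transitivity. Two
  contractions at the same edge point agree up to the name of the new edge; at distinct edge points
  they commute, unless the two points form a 2-cycle, in which case both results are a single loop.
  So contraction is locally confluent modulo isomorphism, and Newman's lemma modulo isomorphism
  gives confluence.\<close>

section \<open>Terminating rewriting modulo an equivalence\<close>

locale rewriting_modulo =
  fixes P :: "'a \<Rightarrow> bool" and r :: "'a \<Rightarrow> 'a \<Rightarrow> bool"
    and eq :: "'a \<Rightarrow> 'a \<Rightarrow> bool" and m :: "'a \<Rightarrow> nat"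
  assumes step_closed: "P x \<Longrightarrow> r x y \<Longrightarrow> P y"
    and step_decreasing: "P x \<Longrightarrow> r x y \<Longrightarrow> m y < m x"
    and eq_refl: "eq x x"
    and eq_sym: "P x \<Longrightarrow> P y \<Longrightarrow> eq x y \<Longrightarrow> eq y x"
      \<comment> \<open>graph isomorphism is symmetric only between pre-open graphs\<close>
    and eq_trans: "eq x y \<Longrightarrow> eq y z \<Longrightarrow> eq x z"
    and eq_measure: "eq x y \<Longrightarrow> m x = m y"
    and eq_simulates_step: "P x \<Longrightarrow> P y \<Longrightarrow> eq x y \<Longrightarrow> r x x' \<Longrightarrow> \<exists>y'. r y y' \<and> eq x' y'"
begin

definition below :: "'a \<Rightarrow> 'a \<Rightarrow> bool" where
  "below y x \<longleftrightarrow> (\<exists>x'. r\<^sup>*\<^sup>* x x' \<and> eq y x')"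

definition joinable :: "'a \<Rightarrow> 'a \<Rightarrow> bool" where
  "joinable a b \<longleftrightarrow> (\<exists>c d. r\<^sup>*\<^sup>* a c \<and> r\<^sup>*\<^sup>* b d \<and> eq c d)"

lemma steps_closed: "r\<^sup>*\<^sup>* x y \<Longrightarrow> P x \<Longrightarrow> P y"
  by (induction rule: rtranclp_induct) (auto intro: step_closed)

lemma steps_measure_le: "r\<^sup>*\<^sup>* x y \<Longrightarrow> P x \<Longrightarrow> m y \<le> m x"
proof (induction rule: rtranclp_induct)
  case (step y z)
  then have "m z < m y" using step_decreasing steps_closed by blast
  with step show ?case by simp
qed simp

lemma steps_measure_eq: "r\<^sup>*\<^sup>* x y \<Longrightarrow> P x \<Longrightarrow> m y = m x \<Longrightarrow> y = x"
proof (induction rule: converse_rtranclp_induct)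
  case (step x z)
  then have "m y \<le> m z" "m z < m x"
    using steps_measure_le step_closed step_decreasing by blast+
  with step.prems show ?case by simp
qed simp

lemma eq_simulates_steps:
  "r\<^sup>*\<^sup>* x x' \<Longrightarrow> P x \<Longrightarrow> P y \<Longrightarrow> eq x y \<Longrightarrow> \<exists>y'. r\<^sup>*\<^sup>* y y' \<and> eq x' y'"
proof (induction rule: rtranclp_induct)
  case (step x' x'')
  then obtain y' where y': "r\<^sup>*\<^sup>* y y'" "eq x' y'" by blast
  moreover have "P x'" "P y'" using step y' steps_closed by blast+
  ultimately obtain y'' where "r y' y''" "eq x'' y''"
    using eq_simulates_step step.hyps(2) by blast
  with y' show ?case using rtranclp.rtrancl_into_rtrancl by fast
qed blast

lemma joinable_if_eq: "eq a b \<Longrightarrow> joinable a b"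
  unfolding joinable_def by blast

lemma joinable_sym:
  assumes "P a" "P b" "joinable a b"
  shows "joinable b a"
proof -
  obtain c d where cd: "r\<^sup>*\<^sup>* a c" "r\<^sup>*\<^sup>* b d" "eq c d"
    using assms(3) unfolding joinable_def by blast
  have "eq d c" using eq_sym[OF steps_closed steps_closed cd(3)] cd assms by blast
  with cd show ?thesis unfolding joinable_def by blast
qed

lemma joinable_eq_left:
  assumes "P a" "P a'" "P b" "eq a a'" "joinable a b"
  shows "joinable a' b"
proof -
  obtain c d where cd: "r\<^sup>*\<^sup>* a c" "r\<^sup>*\<^sup>* b d" "eq c d"
    using assms(5) unfolding joinable_def by blast
  obtain c' where c': "r\<^sup>*\<^sup>* a' c'" "eq c c'"
    using eq_simulates_steps[OF cd(1) assms(1,2,4)] by blast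
  have "P c" "P c'" using cd(1) c'(1) assms(1,2) steps_closed by blast+
  then have "eq c' d" using eq_trans[OF eq_sym cd(3)] c'(2) by blast
  with c' cd show ?thesis unfolding joinable_def by blast
qed

lemma joinable_eq_cong:
  assumes "P a" "P a'" "P b" "P b'" "eq a a'" "eq b b'" "joinable a b"
  shows "joinable a' b'"
proof -
  have "joinable b a'" using joinable_eq_left[OF assms(1,2,3,5,7)] joinable_sym assms by blast
  then have "joinable b' a'" using joinable_eq_left assms by blast
  then show ?thesis using joinable_sym assms by blast
qed

lemma below_refl: "below x x"
  unfolding below_def using eq_refl by blast

lemma below_trans:
  assumes "P y" "P x" "below z y" "below y x"
  shows "below z x"
proof -
  obtain y' where y': "r\<^sup>*\<^sup>* y y'" "eq z y'" using assms(3) unfolding below_def by blast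
  obtain x' where x': "r\<^sup>*\<^sup>* x x'" "eq y x'" using assms(4) unfolding below_def by blast
  have "P x'" using x'(1) assms(2) steps_closed by blast
  then obtain x'' where "r\<^sup>*\<^sup>* x' x''" "eq y' x''"
    using eq_simulates_steps[OF y'(1) assms(1) _ x'(2)] by blast
  with x' y' show ?thesis unfolding below_def using eq_trans rtranclp_trans by metis
qed

lemma below_measure_le: "P x \<Longrightarrow> below y x \<Longrightarrow> m y \<le> m x"
  unfolding below_def using steps_measure_le eq_measure by fastforce

lemma below_measure_eq: "P x \<Longrightarrow> below y x \<Longrightarrow> m y = m x \<Longrightarrow> eq y x"
  unfolding below_def using steps_measure_eq eq_measure by fastforce

lemma below_antisym:
  assumes "P x" "P y" "below y x" "below x y"
  shows "eq x y"
proof -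
  have "m x = m y" using below_measure_le assms by (simp add: le_antisym)
  then show ?thesis using below_measure_eq[OF assms(2,4)] by blast
qed

lemma below_wf: "\<nexists>f. \<forall>i. P (f i) \<and> below (f (Suc i)) (f i) \<and> \<not> eq (f (Suc i)) (f i)"
proof
  assume "\<exists>f. \<forall>i. P (f i) \<and> below (f (Suc i)) (f i) \<and> \<not> eq (f (Suc i)) (f i)"
  then obtain f where f: "\<And>i. P (f i)" "\<And>i. below (f (Suc i)) (f i)" "\<And>i. \<not> eq (f (Suc i)) (f i)"
    by blast
  have "m (f (Suc i)) < m (f i)" for i
    using below_measure_le[OF f(1,2)] below_measure_eq[OF f(1,2)] f(3) by (meson le_neq_implies_less)
  then show False using wf_iff_no_infinite_down_chain[of "measure m"] by auto
qed

end

locale locally_confluent_modulo = rewriting_modulo +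
  assumes locally_confluent: "P x \<Longrightarrow> r x a \<Longrightarrow> r x b \<Longrightarrow> joinable a b"
begin

lemma confluent: "P x \<Longrightarrow> r\<^sup>*\<^sup>* x a \<Longrightarrow> r\<^sup>*\<^sup>* x b \<Longrightarrow> joinable a b"
proof (induction "m x" arbitrary: x a b rule: less_induct)
  case less
  show ?case
  proof (cases "a = x \<or> b = x")
    case True
    then show ?thesis using less.prems eq_refl unfolding joinable_def by blast
  next
    case False
    then obtain a1 b1 where a1: "r x a1" "r\<^sup>*\<^sup>* a1 a" and b1: "r x b1" "r\<^sup>*\<^sup>* b1 b"
      using less.prems converse_rtranclpE by metis
    have P1: "P a1" "P b1" using a1 b1 less.prems step_closed by blast+
    obtain c d where cd: "r\<^sup>*\<^sup>* a1 c" "r\<^sup>*\<^sup>* b1 d" "eq c d"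
      using locally_confluent[OF less.prems(1) a1(1) b1(1)] unfolding joinable_def by blast
    obtain a' c' where ac: "r\<^sup>*\<^sup>* a a'" "r\<^sup>*\<^sup>* c c'" "eq a' c'"
      using less.hyps[OF step_decreasing[OF less.prems(1) a1(1)] P1(1) a1(2) cd(1)]
      unfolding joinable_def by blast
    have Pcd: "P c" "P d" "P c'" "P a'"
      using cd P1 ac a1(2) steps_closed by blast+
    obtain d' where d': "r\<^sup>*\<^sup>* d d'" "eq c' d'"
      using eq_simulates_steps[OF ac(2) Pcd(1,2) cd(3)] by blast
    obtain b' d'' where bd: "r\<^sup>*\<^sup>* b b'" "r\<^sup>*\<^sup>* d' d''" "eq b' d''"
      using less.hyps[OF step_decreasing[OF less.prems(1) b1(1)] P1(2) b1(2)]
        rtranclp_trans[OF cd(2) d'(1)] unfolding joinable_def by blast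
    have "P d'" using d'(1) Pcd steps_closed by blast
    then have "eq d' a'" using eq_sym[OF _ _ eq_trans[OF ac(3) d'(2)]] Pcd by blast
    then obtain a'' where a'': "r\<^sup>*\<^sup>* a' a''" "eq d'' a''"
      using eq_simulates_steps[OF bd(2) \<open>P d'\<close> Pcd(4)] by blast
    have "P b'" using steps_closed[OF rtranclp_trans[OF b1(2) bd(1)] P1(2)] .
    moreover have "P a''" using steps_closed[OF a''(1) Pcd(4)] .
    ultimately have "eq a'' b'" using eq_sym[OF _ _ eq_trans[OF bd(3) a''(2)]] by blast
    then show ?thesis using rtranclp_trans[OF ac(1) a''(1)] bd(1) unfolding joinable_def by blast
  qed
qed

lemma below_confluent:
  assumes "P x" "P y1" "P y2" "below y1 x" "below y2 x"
  shows "\<exists>z. P z \<and> below z y1 \<and> below z y2"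
proof -
  obtain x1 where x1: "r\<^sup>*\<^sup>* x x1" "eq y1 x1" using assms(4) unfolding below_def by blast
  obtain x2 where x2: "r\<^sup>*\<^sup>* x x2" "eq y2 x2" using assms(5) unfolding below_def by blast
  have P12: "P x1" "P x2" using x1 x2 assms(1) steps_closed by blast+
  obtain c d where cd: "r\<^sup>*\<^sup>* x1 c" "r\<^sup>*\<^sup>* x2 d" "eq c d"
    using confluent[OF assms(1) x1(1) x2(1)] unfolding joinable_def by blast
  obtain c' where c': "r\<^sup>*\<^sup>* y1 c'" "eq c c'"
    using eq_simulates_steps[OF cd(1) P12(1) assms(2) eq_sym[OF assms(2) P12(1) x1(2)]] by blast
  obtain d' where d': "r\<^sup>*\<^sup>* y2 d'" "eq d d'"
    using eq_simulates_steps[OF cd(2) P12(2) assms(3) eq_sym[OF assms(3) P12(2) x2(2)]] by blast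
  have "P c" "P c'" using cd(1) c'(1) P12 assms(2) steps_closed by blast+
  then have "eq c' d'" using eq_trans[OF eq_sym[OF _ _ c'(2)] eq_trans[OF cd(3) d'(2)]] by blast
  then show ?thesis using c' d' \<open>P c'\<close> eq_refl unfolding below_def by blast
qed

end

section \<open>Contraction steps\<close>

definition contractible :: "('e, 'v) pgraph \<Rightarrow> 'v \<Rightarrow> 'e \<Rightarrow> 'e \<Rightarrow> 'e \<Rightarrow> bool" where
  "contractible G p e1 e2 e3 \<longleftrightarrow> p \<in> epts G \<and> e1 \<in> edges G \<and> e2 \<in> edges G \<and> e1 \<noteq> e2
     \<and> tgt G e1 = p \<and> src G e2 = p \<and> e3 \<notin> edges G - {e1, e2}"

definition contract :: "('e, 'v) pgraph \<Rightarrow> 'v \<Rightarrow> 'e \<Rightarrow> 'e \<Rightarrow> 'e \<Rightarrow> ('e, 'v) pgraph" where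
  "contract G p e1 e2 e3 = \<lparr> edges = (edges G - {e1, e2}) \<union> {e3},
     verts = verts G, epts = epts G - {p},
     src = (src G)(e3 := src G e1), tgt = (tgt G)(e3 := tgt G e2) \<rparr>"

lemma contract_step_iff:
  "contract_step G G' \<longleftrightarrow> (\<exists>p e1 e2 e3. contractible G p e1 e2 e3 \<and> G' = contract G p e1 e2 e3)"
  unfolding contract_step_def contractible_def contract_def by blast

lemma contract_step_contract: "contractible G p e1 e2 e3 \<Longrightarrow> contract_step G (contract G p e1 e2 e3)"
  unfolding contract_step_iff by blast

lemma contractible_reuse_in_edge: "contractible G p e1 e2 e3 \<Longrightarrow> contractible G p e1 e2 e1"
  unfolding contractible_def by auto

lemma contract_simps [simp]:
  "edges (contract G p e1 e2 e3) = insert e3 (edges G - {e1, e2})"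
  "verts (contract G p e1 e2 e3) = verts G"
  "epts (contract G p e1 e2 e3) = epts G - {p}"
  "src (contract G p e1 e2 e3) = (src G)(e3 := src G e1)"
  "tgt (contract G p e1 e2 e3) = (tgt G)(e3 := tgt G e2)"
  by (auto simp: contract_def)

lemma open_graphD:
  assumes "open_graph G"
  shows "pre_open_graph G"
    and "e \<in> edges G \<Longrightarrow> e' \<in> edges G \<Longrightarrow> src G e \<in> epts G \<Longrightarrow> src G e = src G e' \<Longrightarrow> e = e'"
    and "e \<in> edges G \<Longrightarrow> e' \<in> edges G \<Longrightarrow> tgt G e \<in> epts G \<Longrightarrow> tgt G e = tgt G e' \<Longrightarrow> e = e'"
  using assms unfolding open_graph_def inj_on_def by auto

lemma pre_open_graphD:
  assumes "pre_open_graph G"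
  shows "verts G \<inter> epts G = {}"
    and "e \<in> edges G \<Longrightarrow> src G e \<in> nodes G" "e \<in> edges G \<Longrightarrow> tgt G e \<in> nodes G"
  using assms unfolding pre_open_graph_def by auto

lemma nodes_contract: "p \<notin> verts G \<Longrightarrow> nodes (contract G p e1 e2 e3) = nodes G - {p}"
  unfolding nodes_def by auto

lemma pre_open_graph_contract:
  assumes G: "open_graph G" and c: "contractible G p e1 e2 e3"
  shows "pre_open_graph (contract G p e1 e2 e3)"
proof -
  let ?H = "contract G p e1 e2 e3"
  from c have c': "p \<in> epts G" "e1 \<in> edges G" "e2 \<in> edges G" "e1 \<noteq> e2"
      "tgt G e1 = p" "src G e2 = p" "e3 \<notin> edges G - {e1, e2}"
    unfolding contractible_def by auto
  note pre = pre_open_graphD[OF open_graphD(1)[OF G]]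
  have src_ne_p: "src G e \<noteq> p" if "e \<in> edges G" "e \<noteq> e2" for e
    using open_graphD(2)[OF G that(1) c'(3)] c' that by auto
  have tgt_ne_p: "tgt G e \<noteq> p" if "e \<in> edges G" "e \<noteq> e1" for e
    using open_graphD(3)[OF G that(1) c'(2)] c' that by auto
  have "p \<notin> verts G" using c'(1) pre(1) by blast
  then have nodes: "nodes ?H = nodes G - {p}" by (rule nodes_contract)
  have "src ?H e \<in> nodes ?H \<and> tgt ?H e \<in> nodes ?H" if "e \<in> edges ?H" for e
  proof (cases "e = e3")
    case True
    then show ?thesis using src_ne_p[of e1] tgt_ne_p[of e2] c' nodes pre(2,3) by auto
  next
    case False
    then show ?thesis using that src_ne_p[of e] tgt_ne_p[of e] c' nodes pre(2,3) by auto
  qed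
  then show ?thesis using pre(1) unfolding pre_open_graph_def by auto
qed

lemma open_graph_contract:
  assumes G: "open_graph G" and c: "contractible G p e1 e2 e3"
  shows "open_graph (contract G p e1 e2 e3)"
proof -
  let ?H = "contract G p e1 e2 e3"
  from c have c': "e1 \<in> edges G" "e2 \<in> edges G" "e1 \<noteq> e2" "e3 \<notin> edges G - {e1, e2}"
    unfolding contractible_def by auto
  \<comment> \<open>Injectivity is inherited from G by renaming e3 back to e1 (for sources) or to e2 (for targets).\<close>
  have "inj_on (src ?H) {e \<in> edges ?H. src ?H e \<in> epts ?H}"
  proof (rule inj_onI)
    fix x y
    assume x: "x \<in> {e \<in> edges ?H. src ?H e \<in> epts ?H}" and y: "y \<in> {e \<in> edges ?H. src ?H e \<in> epts ?H}"
      and xy: "src ?H x = src ?H y"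
    define old where "old e = (if e = e3 then e1 else e)" for e
    have "old x \<in> edges G" "src G (old x) = src ?H x" "old y \<in> edges G" "src G (old y) = src ?H y"
      using x y c' by (auto simp: old_def)
    then have "old x = old y" using open_graphD(2)[OF G] x xy by simp
    then show "x = y" using x y c' by (auto simp: old_def split: if_splits)
  qed
  moreover have "inj_on (tgt ?H) {e \<in> edges ?H. tgt ?H e \<in> epts ?H}"
  proof (rule inj_onI)
    fix x y
    assume x: "x \<in> {e \<in> edges ?H. tgt ?H e \<in> epts ?H}" and y: "y \<in> {e \<in> edges ?H. tgt ?H e \<in> epts ?H}"
      and xy: "tgt ?H x = tgt ?H y"
    define old where "old e = (if e = e3 then e2 else e)" for e
    have "old x \<in> edges G" "tgt G (old x) = tgt ?H x" "old y \<in> edges G" "tgt G (old y) = tgt ?H y"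
      using x y c' by (auto simp: old_def)
    then have "old x = old y" using open_graphD(3)[OF G] x xy by simp
    then show "x = y" using x y c' by (auto simp: old_def split: if_splits)
  qed
  ultimately show ?thesis using pre_open_graph_contract[OF G c] unfolding open_graph_def by blast
qed

lemma card_edges_contract:
  assumes "finite (edges G)" "contractible G p e1 e2 e3"
  shows "card (edges (contract G p e1 e2 e3)) = card (edges G) - 1"
proof -
  have e: "e1 \<in> edges G" "e2 \<in> edges G" "e1 \<noteq> e2" "e3 \<notin> edges G - {e1, e2}"
    using assms(2) unfolding contractible_def by auto
  have "card {e1, e2} \<le> card (edges G)" using assms(1) e by (intro card_mono) auto
  then show ?thesis using assms(1) e by (simp add: card_Diff_subset)
qed

lemma fin_open_graph_contract:
  assumes G: "fin_open_graph G" and c: "contractible G p e1 e2 e3"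
  shows "fin_open_graph (contract G p e1 e2 e3)"
    and "card (edges (contract G p e1 e2 e3)) < card (edges G)"
proof -
  have "finite (edges G)" and "edges G \<noteq> {}"
    using G c unfolding fin_open_graph_def finite_graph_def contractible_def by auto
  then show "card (edges (contract G p e1 e2 e3)) < card (edges G)"
    using card_edges_contract[OF _ c] by (simp add: card_gt_0_iff)
  show "fin_open_graph (contract G p e1 e2 e3)"
    using G open_graph_contract[OF _ c] unfolding fin_open_graph_def finite_graph_def by auto
qed

lemma fin_open_graph_contract_step:
  assumes "fin_open_graph G" "contract_step G H"
  shows "fin_open_graph H" "card (edges H) < card (edges G)"
proof -
  obtain p e1 e2 e3 where "contractible G p e1 e2 e3" "H = contract G p e1 e2 e3"
    using assms(2) unfolding contract_step_iff by blast
  then show "fin_open_graph H" "card (edges H) < card (edges G)"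
    using fin_open_graph_contract[OF assms(1)] by simp_all
qed

section \<open>Graph isomorphisms\<close>

lemma graph_iso_refl: "graph_iso G G"
  unfolding graph_iso_def by (rule exI[of _ id], rule exI[of _ id]) auto

lemma graph_iso_trans:
  assumes "graph_iso G H" "graph_iso H K"
  shows "graph_iso G K"
proof -
  obtain fE fN where "bij_betw fE (edges G) (edges H)" "bij_betw fN (nodes G) (nodes H)"
    "fN ` verts G \<subseteq> verts H" "fN ` epts G \<subseteq> epts H"
    "\<forall>e\<in>edges G. fN (src G e) = src H (fE e) \<and> fN (tgt G e) = tgt H (fE e)"
    using assms(1) unfolding graph_iso_def by blast
  moreover obtain gE gN where "bij_betw gE (edges H) (edges K)" "bij_betw gN (nodes H) (nodes K)"
    "gN ` verts H \<subseteq> verts K" "gN ` epts H \<subseteq> epts K"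
    "\<forall>e\<in>edges H. gN (src H e) = src K (gE e) \<and> gN (tgt H e) = tgt K (gE e)"
    using assms(2) unfolding graph_iso_def by blast
  ultimately show ?thesis
    unfolding graph_iso_def
    by (intro exI[of _ "gE \<circ> fE"] exI[of _ "gN \<circ> fN"])
      (auto simp: image_subset_iff bij_betw_apply intro: bij_betw_trans)
qed

lemma graph_iso_card_edges: "graph_iso G H \<Longrightarrow> card (edges G) = card (edges H)"
  unfolding graph_iso_def by (auto intro: bij_betw_same_card)

lemma graph_iso_if_agree:
  assumes "edges G = edges H" "verts G = verts H" "epts G = epts H"
    "\<And>e. e \<in> edges G \<Longrightarrow> src G e = src H e \<and> tgt G e = tgt H e"
  shows "graph_iso G H"
  unfolding graph_iso_def
  by (rule exI[of _ id], rule exI[of _ id]) (use assms in \<open>auto simp: nodes_def\<close>)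

lemma bij_betw_nodes_onto_classes:
  assumes "pre_open_graph H" "bij_betw fN (nodes G) (nodes H)"
    "fN ` verts G \<subseteq> verts H" "fN ` epts G \<subseteq> epts H"
  shows "fN ` verts G = verts H" "fN ` epts G = epts H"
proof -
  have "verts H \<union> epts H = fN ` verts G \<union> fN ` epts G"
    using bij_betw_imp_surj_on[OF assms(2)] unfolding nodes_def by auto
  then show "fN ` verts G = verts H" "fN ` epts G = epts H"
    using pre_open_graphD(1)[OF assms(1)] assms(3,4) by blast+
qed

lemma graph_iso_sym:
  assumes iso: "graph_iso G H" and G: "pre_open_graph G" and H: "pre_open_graph H"
  shows "graph_iso H G"
proof -
  obtain fE fN where bE: "bij_betw fE (edges G) (edges H)" and bN: "bij_betw fN (nodes G) (nodes H)"
    and classes: "fN ` verts G \<subseteq> verts H" "fN ` epts G \<subseteq> epts H"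
    and hom: "\<forall>e\<in>edges G. fN (src G e) = src H (fE e) \<and> fN (tgt G e) = tgt H (fE e)"
    using iso unfolding graph_iso_def by blast
  define gE where "gE = inv_into (edges G) fE"
  define gN where "gN = inv_into (nodes G) fN"
  have "bij_betw gE (edges H) (edges G)" "bij_betw gN (nodes H) (nodes G)"
    unfolding gE_def gN_def using bE bN by (simp_all add: bij_betw_inv_into)
  moreover have "gN ` verts H = verts G" "gN ` epts H = epts G"
  proof -
    have "inj_on fN (nodes G)" using bN by (rule bij_betw_imp_inj_on)
    then have "gN ` fN ` verts G = verts G" "gN ` fN ` epts G = epts G"
      unfolding gN_def nodes_def by (auto intro: inv_into_image_cancel)
    then show "gN ` verts H = verts G" "gN ` epts H = epts G"
      using bij_betw_nodes_onto_classes[OF H bN classes] by simp_all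
  qed
  moreover have "gN (src H e) = src G (gE e) \<and> gN (tgt H e) = tgt G (gE e)" if "e \<in> edges H" for e
  proof -
    have e': "gE e \<in> edges G" "fE (gE e) = e"
      using that bE unfolding gE_def by (auto simp: bij_betw_def inv_into_into f_inv_into_f)
    then show ?thesis
      using hom e'(1) pre_open_graphD(2,3)[OF G e'(1)] bij_betw_imp_inj_on[OF bN]
      unfolding gN_def by (metis inv_into_f_f)
  qed
  ultimately show ?thesis unfolding graph_iso_def by blast
qed

lemma contract_rename_iso:
  assumes "contractible G p e1 e2 e3" "contractible G p e1 e2 e3'"
  shows "graph_iso (contract G p e1 e2 e3) (contract G p e1 e2 e3')"
  unfolding graph_iso_def
proof (rule exI[of _ "id(e3 := e3')"], rule exI[of _ id], intro conjI)
  show "bij_betw (id(e3 := e3')) (edges (contract G p e1 e2 e3)) (edges (contract G p e1 e2 e3'))"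
    using assms unfolding contractible_def bij_betw_def inj_on_def by auto
qed (use assms in \<open>auto simp: contractible_def nodes_def\<close>)

lemma bij_betw_contract_edges:
  assumes bE: "bij_betw fE (edges G) (edges H)" and c: "contractible G p e1 e2 e3"
  shows "bij_betw (fE(e3 := fE e1))
    (edges (contract G p e1 e2 e3)) (edges (contract H q (fE e1) (fE e2) (fE e1)))"
proof -
  from c have c': "e1 \<in> edges G" "e2 \<in> edges G" "e1 \<noteq> e2" "e3 \<notin> edges G - {e1, e2}"
    unfolding contractible_def by auto
  have "fE ` (edges G - {e1, e2}) = edges H - {fE e1, fE e2}"
    using bE c' by (auto simp: bij_betw_def inj_on_def)
  moreover have "(fE(e3 := fE e1)) ` (edges G - {e1, e2}) = fE ` (edges G - {e1, e2})"
    using c' by auto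
  ultimately have "(fE(e3 := fE e1)) ` edges (contract G p e1 e2 e3)
      = edges (contract H q (fE e1) (fE e2) (fE e1))"
    by (simp only: contract_simps image_insert fun_upd_same)
  moreover have "inj_on (fE(e3 := fE e1)) (edges (contract G p e1 e2 e3))"
    using bij_betw_imp_inj_on[OF bE] c' by (auto simp: inj_on_def)
  ultimately show ?thesis by (simp add: bij_betw_def)
qed

lemma graph_iso_contract:
  assumes G: "pre_open_graph G" and H: "pre_open_graph H" and iso: "graph_iso G H"
    and c: "contractible G p e1 e2 e3"
  shows "\<exists>H'. contract_step H H' \<and> graph_iso (contract G p e1 e2 e3) H'"
proof -
  obtain fE fN where bE: "bij_betw fE (edges G) (edges H)" and bN: "bij_betw fN (nodes G) (nodes H)"
    and classes: "fN ` verts G \<subseteq> verts H" "fN ` epts G \<subseteq> epts H"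
    and hom: "\<forall>e\<in>edges G. fN (src G e) = src H (fE e) \<and> fN (tgt G e) = tgt H (fE e)"
    using iso unfolding graph_iso_def by blast
  from c have c': "p \<in> epts G" "e1 \<in> edges G" "e2 \<in> edges G" "e1 \<noteq> e2"
      "tgt G e1 = p" "src G e2 = p" "e3 \<notin> edges G - {e1, e2}"
    unfolding contractible_def by auto
  have injE: "inj_on fE (edges G)" and injN: "inj_on fN (nodes G)"
    using bE bN by (simp_all add: bij_betw_def)
  have p: "p \<in> nodes G" "p \<notin> verts G" "fN p \<in> epts H" "fN p \<notin> verts H"
    using c'(1) classes pre_open_graphD(1)[OF G] pre_open_graphD(1)[OF H] by (auto simp: nodes_def)
  let ?G' = "contract G p e1 e2 e3" and ?H' = "contract H (fN p) (fE e1) (fE e2) (fE e1)"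
  have cH: "contractible H (fN p) (fE e1) (fE e2) (fE e1)"
    unfolding contractible_def using c' p hom bij_betw_apply[OF bE] injE by (auto simp: inj_on_def)
  define fE' where "fE' = fE(e3 := fE e1)"
  have "bij_betw fE' (edges ?G') (edges ?H')"
    unfolding fE'_def by (rule bij_betw_contract_edges[OF bE c])
  moreover have "bij_betw fN (nodes ?G') (nodes ?H')"
    using bN injN p unfolding nodes_contract[OF p(2)] nodes_contract[OF p(4)]
    by (auto simp: bij_betw_def inj_on_def)
  moreover have "fN ` verts ?G' \<subseteq> verts ?H'" "fN ` epts ?G' \<subseteq> epts ?H'"
    using classes injN p by (auto simp: inj_on_def nodes_def)
  moreover have "fN (src ?G' e) = src ?H' (fE' e) \<and> fN (tgt ?G' e) = tgt ?H' (fE' e)"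
    if "e \<in> edges ?G'" for e
  proof (cases "e = e3")
    case True
    then show ?thesis using hom c' by (simp add: fE'_def)
  next
    case False
    then have "e \<in> edges G" "e \<noteq> e1" "e \<noteq> e2" using that by auto
    moreover have "fE e \<noteq> fE e1" using injE c' calculation by (auto simp: inj_on_def)
    ultimately show ?thesis using hom False by (simp add: fE'_def)
  qed
  ultimately have "graph_iso ?G' ?H'" unfolding graph_iso_def by blast
  then show ?thesis using contract_step_contract[OF cH] by blast
qed

section \<open>Contraction as rewriting modulo isomorphism\<close>

lemma fin_open_graph_pre_open: "fin_open_graph G \<Longrightarrow> pre_open_graph G"
  unfolding fin_open_graph_def using open_graphD(1) by blast

lemma rewriting_modulo_contraction:
  "rewriting_modulo fin_open_graph contract_step graph_iso (\<lambda>G. card (edges G))"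
proof
  fix G H G' :: "('e, 'v) pgraph"
  show "fin_open_graph G \<Longrightarrow> contract_step G H \<Longrightarrow> fin_open_graph H"
    using fin_open_graph_contract_step(1) .
  show "fin_open_graph G \<Longrightarrow> contract_step G H \<Longrightarrow> card (edges H) < card (edges G)"
    using fin_open_graph_contract_step(2) .
  show "graph_iso G G" by (rule graph_iso_refl)
  show "fin_open_graph G \<Longrightarrow> fin_open_graph H \<Longrightarrow> graph_iso G H \<Longrightarrow> graph_iso H G"
    using graph_iso_sym fin_open_graph_pre_open by blast
  show "graph_iso G H \<Longrightarrow> graph_iso H G' \<Longrightarrow> graph_iso G G'" by (rule graph_iso_trans)
  show "graph_iso G H \<Longrightarrow> card (edges G) = card (edges H)" by (rule graph_iso_card_edges)
  show "fin_open_graph G \<Longrightarrow> fin_open_graph H \<Longrightarrow> graph_iso G H \<Longrightarrow> contract_step G G'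
      \<Longrightarrow> \<exists>H'. contract_step H H' \<and> graph_iso G' H'"
    unfolding contract_step_iff[of G] using graph_iso_contract fin_open_graph_pre_open by metis
qed

lemma below_contract_step_eq: "rewriting_modulo.below contract_step graph_iso = contracts_to"
  by (simp add: rewriting_modulo.below_def[OF rewriting_modulo_contraction]
      contracts_to_def fun_eq_iff)

interpretation contraction: rewriting_modulo fin_open_graph contract_step graph_iso "\<lambda>G. card (edges G)"
  rewrites "rewriting_modulo.below contract_step graph_iso = contracts_to"
  by (rule rewriting_modulo_contraction below_contract_step_eq)+

lemma joinable_contract_disjoint:
  assumes "contractible G p e1 e2 e1" "contractible G q f1 f2 f1"
    and "p \<noteq> q" "e2 \<noteq> f1" "e1 \<noteq> f2"
  shows "contraction.joinable (contract G p e1 e2 e1) (contract G q f1 f2 f1)"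
proof -
  have "e1 \<noteq> f1" "e2 \<noteq> f2" using assms unfolding contractible_def by auto
  with assms have "contractible (contract G p e1 e2 e1) q f1 f2 f1"
      "contractible (contract G q f1 f2 f1) p e1 e2 e1"
    by (simp_all add: contractible_def)
  moreover have "graph_iso (contract (contract G p e1 e2 e1) q f1 f2 f1)
      (contract (contract G q f1 f2 f1) p e1 e2 e1)"
    by (rule graph_iso_if_agree) (use assms \<open>e1 \<noteq> f1\<close> \<open>e2 \<noteq> f2\<close> in \<open>auto simp: contractible_def\<close>)
  ultimately show ?thesis
    unfolding contraction.joinable_def by (blast intro: contract_step_contract)
qed

lemma joinable_contract_path:
  assumes "contractible G p e1 e2 e1" "contractible G q e2 f2 e2" "p \<noteq> q" "e1 \<noteq> f2"
  shows "contraction.joinable (contract G p e1 e2 e1) (contract G q e2 f2 e2)"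
proof -
  have "e2 \<noteq> f2" using assms unfolding contractible_def by auto
  with assms have "contractible (contract G p e1 e2 e1) q e1 f2 e1"
      "contractible (contract G q e2 f2 e2) p e1 e2 e1"
    by (simp_all add: contractible_def)
  moreover have "graph_iso (contract (contract G p e1 e2 e1) q e1 f2 e1)
      (contract (contract G q e2 f2 e2) p e1 e2 e1)"
    by (rule graph_iso_if_agree) (use assms \<open>e2 \<noteq> f2\<close> in \<open>auto simp: contractible_def\<close>)
  ultimately show ?thesis
    unfolding contraction.joinable_def by (blast intro: contract_step_contract)
qed

lemma contract_two_cycle_iso:
  assumes G: "open_graph G" and c: "contractible G p e1 e2 e1" "contractible G q e2 e1 e2"
    and pq: "p \<noteq> q"
  shows "graph_iso (contract G p e1 e2 e1) (contract G q e2 e1 e2)"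
proof -
  from c have c': "p \<in> epts G" "q \<in> epts G" "e1 \<in> edges G" "e2 \<in> edges G" "e1 \<noteq> e2"
      "tgt G e1 = p" "src G e2 = p" "tgt G e2 = q" "src G e1 = q"
    unfolding contractible_def by auto
  have pv: "p \<notin> verts G" "q \<notin> verts G"
    using c' pre_open_graphD(1)[OF open_graphD(1)[OF G]] by auto
  have other: "src G e \<noteq> p \<and> src G e \<noteq> q \<and> tgt G e \<noteq> p \<and> tgt G e \<noteq> q"
    if "e \<in> edges G" "e \<noteq> e1" "e \<noteq> e2" for e
    using open_graphD(2)[OF G that(1) c'(4)] open_graphD(2)[OF G that(1) c'(3)]
      open_graphD(3)[OF G that(1) c'(3)] open_graphD(3)[OF G that(1) c'(4)] c' that by auto
  \<comment> \<open>Both contractions leave a loop at the surviving point; swap the points and the edges.\<close>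
  define fE where "fE e = (if e = e1 then e2 else if e = e2 then e1 else e)" for e
  define fN where "fN v = (if v = p then q else if v = q then p else v)" for v
  show ?thesis unfolding graph_iso_def
  proof (intro exI[of _ fE] exI[of _ fN] conjI)
    show "bij_betw fE (edges (contract G p e1 e2 e1)) (edges (contract G q e2 e1 e2))"
      unfolding bij_betw_def inj_on_def fE_def using c' by (auto simp: image_iff)
    show "bij_betw fN (nodes (contract G p e1 e2 e1)) (nodes (contract G q e2 e1 e2))"
      unfolding bij_betw_def inj_on_def fN_def nodes_def using c' pq pv by (auto simp: image_iff)
    show "fN ` verts (contract G p e1 e2 e1) \<subseteq> verts (contract G q e2 e1 e2)"
      unfolding fN_def using pv by auto
    show "fN ` epts (contract G p e1 e2 e1) \<subseteq> epts (contract G q e2 e1 e2)"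
      unfolding fN_def using c' pq by auto
    show "\<forall>e\<in>edges (contract G p e1 e2 e1).
      fN (src (contract G p e1 e2 e1) e) = src (contract G q e2 e1 e2) (fE e) \<and>
      fN (tgt (contract G p e1 e2 e1) e) = tgt (contract G q e2 e1 e2) (fE e)"
    proof
      fix e assume e: "e \<in> edges (contract G p e1 e2 e1)"
      show "fN (src (contract G p e1 e2 e1) e) = src (contract G q e2 e1 e2) (fE e) \<and>
        fN (tgt (contract G p e1 e2 e1) e) = tgt (contract G q e2 e1 e2) (fE e)"
      proof (cases "e = e1")
        case True
        then show ?thesis using c' pq by (simp add: fE_def fN_def)
      next
        case False
        then have "e \<in> edges G" "e \<noteq> e2" using e by auto
        then show ?thesis using other[of e] False c' by (simp add: fE_def fN_def)
      qed
    qed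
  qed
qed

lemma joinable_contract_distinct:
  assumes G: "fin_open_graph G"
    and a: "contractible G p e1 e2 e1" and b: "contractible G q f1 f2 f1" and pq: "p \<noteq> q"
  shows "contraction.joinable (contract G p e1 e2 e1) (contract G q f1 f2 f1)"
proof (cases "e2 = f1"; cases "e1 = f2")
  assume "e2 = f1" "e1 = f2"
  moreover have "open_graph G" using G unfolding fin_open_graph_def by blast
  ultimately have "graph_iso (contract G p e1 e2 e1) (contract G q f1 f2 f1)"
    using contract_two_cycle_iso[of G p e1 e2 q] a b pq by simp
  then show ?thesis by (rule contraction.joinable_if_eq)
next
  assume "e2 = f1" "e1 \<noteq> f2"
  then show ?thesis using joinable_contract_path[of G p e1 e2 q f2] a b pq by simp
next
  assume "e2 \<noteq> f1" "e1 = f2"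
  then have "contraction.joinable (contract G q f1 f2 f1) (contract G p e1 e2 e1)"
    using joinable_contract_path[of G q f1 e1 p e2] a b pq by auto
  then show ?thesis
    using contraction.joinable_sym fin_open_graph_contract(1)[OF G a] fin_open_graph_contract(1)[OF G b]
    by blast
next
  assume "e2 \<noteq> f1" "e1 \<noteq> f2"
  then show ?thesis using joinable_contract_disjoint[OF a b pq] by blast
qed

lemma contract_step_locally_confluent:
  assumes G: "fin_open_graph G" and "contract_step G A" "contract_step G B"
  shows "contraction.joinable A B"
proof -
  obtain p e1 e2 e3 where a: "contractible G p e1 e2 e3" "A = contract G p e1 e2 e3"
    using assms(2) unfolding contract_step_iff by blast
  obtain q f1 f2 f3 where b: "contractible G q f1 f2 f3" "B = contract G q f1 f2 f3"
    using assms(3) unfolding contract_step_iff by blast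
  have oG: "open_graph G" using G unfolding fin_open_graph_def by blast
  show ?thesis
  proof (cases "p = q")
    case True
    \<comment> \<open>An edge point has at most one in-edge and one out-edge, so both contractions remove the same edges.\<close>
    have ea: "e1 \<in> edges G" "e2 \<in> edges G" "tgt G e1 = p" "src G e2 = p" "p \<in> epts G"
      and eb: "f1 \<in> edges G" "f2 \<in> edges G" "tgt G f1 = p" "src G f2 = p"
      using a(1) b(1) True unfolding contractible_def by simp_all
    have "e1 = f1" using open_graphD(3)[OF oG ea(1) eb(1)] ea eb by simp
    moreover have "e2 = f2" using open_graphD(2)[OF oG ea(2) eb(2)] ea eb by simp
    ultimately have "graph_iso A B"
      using contract_rename_iso[of G p e1 e2 e3 f3] a b True by simp
    then show ?thesis by (rule contraction.joinable_if_eq)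
  next
    case False
    have a': "contractible G p e1 e2 e1" and b': "contractible G q f1 f2 f1"
      using a(1) b(1) by (simp_all add: contractible_reuse_in_edge)
    have "contraction.joinable (contract G p e1 e2 e1) (contract G q f1 f2 f1)"
      using joinable_contract_distinct[OF G a' b' False] .
    moreover have "graph_iso (contract G p e1 e2 e1) A" "graph_iso (contract G q f1 f2 f1) B"
      using contract_rename_iso a b a' b' by simp_all
    moreover have "fin_open_graph A" "fin_open_graph B"
      using fin_open_graph_contract(1)[OF G] a b by simp_all
    moreover have "fin_open_graph (contract G p e1 e2 e1)" "fin_open_graph (contract G q f1 f2 f1)"
      using fin_open_graph_contract(1)[OF G] a' b' by simp_all
    ultimately show ?thesis using contraction.joinable_eq_cong by blast
  qed
qed

interpretation contraction: locally_confluent_modulo fin_open_graph contract_step graph_iso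
    "\<lambda>G. card (edges G)"
  rewrites "rewriting_modulo.below contract_step graph_iso = contracts_to"
proof -
  show "locally_confluent_modulo fin_open_graph contract_step graph_iso (\<lambda>G. card (edges G))"
    unfolding locally_confluent_modulo_def locally_confluent_modulo_axioms_def
    using rewriting_modulo_contraction contract_step_locally_confluent by blast
qed (rule below_contract_step_eq)

theorem proposition1:
  shows
   "(\<forall>G :: ('e, 'v) pgraph. fin_open_graph G \<longrightarrow> G \<preceq>\<^sub>c G)
  \<and> (\<forall>G H K :: ('e, 'v) pgraph. fin_open_graph G \<and> fin_open_graph H \<and> fin_open_graph K
        \<longrightarrow> K \<preceq>\<^sub>c H \<longrightarrow> H \<preceq>\<^sub>c G \<longrightarrow> K \<preceq>\<^sub>c G)
  \<and> (\<forall>G H :: ('e, 'v) pgraph. fin_open_graph G \<and> fin_open_graph H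
        \<longrightarrow> H \<preceq>\<^sub>c G \<longrightarrow> G \<preceq>\<^sub>c H \<longrightarrow> graph_iso G H)
  \<and> \<not> (\<exists>f :: nat \<Rightarrow> ('e, 'v) pgraph. \<forall>i. fin_open_graph (f i)
        \<and> f (Suc i) \<preceq>\<^sub>c f i \<and> \<not> graph_iso (f (Suc i)) (f i))
  \<and> (\<forall>G H1 H2 :: ('e, 'v) pgraph. fin_open_graph G \<and> fin_open_graph H1 \<and> fin_open_graph H2
        \<longrightarrow> H1 \<preceq>\<^sub>c G \<longrightarrow> H2 \<preceq>\<^sub>c G
        \<longrightarrow> (\<exists>K :: ('e, 'v) pgraph. open_graph K \<and> K \<preceq>\<^sub>c H1 \<and> K \<preceq>\<^sub>c H2))"
proof (intro conjI allI impI)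
  fix G H K :: "('e, 'v) pgraph"
  show "G \<preceq>\<^sub>c G" by (rule contraction.below_refl)
  show "fin_open_graph G \<and> fin_open_graph H \<and> fin_open_graph K \<Longrightarrow> K \<preceq>\<^sub>c H \<Longrightarrow> H \<preceq>\<^sub>c G
      \<Longrightarrow> K \<preceq>\<^sub>c G"
    using contraction.below_trans by blast
  show "fin_open_graph G \<and> fin_open_graph H \<Longrightarrow> H \<preceq>\<^sub>c G \<Longrightarrow> G \<preceq>\<^sub>c H \<Longrightarrow> graph_iso G H"
    using contraction.below_antisym by blast
next
  show "\<nexists>f :: nat \<Rightarrow> ('e, 'v) pgraph. \<forall>i. fin_open_graph (f i)
      \<and> f (Suc i) \<preceq>\<^sub>c f i \<and> \<not> graph_iso (f (Suc i)) (f i)"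
    by (rule contraction.below_wf)
next
  fix G H1 H2 :: "('e, 'v) pgraph"
  assume "fin_open_graph G \<and> fin_open_graph H1 \<and> fin_open_graph H2" "H1 \<preceq>\<^sub>c G" "H2 \<preceq>\<^sub>c G"
  then obtain K where "fin_open_graph K" "K \<preceq>\<^sub>c H1" "K \<preceq>\<^sub>c H2"
    using contraction.below_confluent by blast
  then show "\<exists>K :: ('e, 'v) pgraph. open_graph K \<and> K \<preceq>\<^sub>c H1 \<and> K \<preceq>\<^sub>c H2"
    unfolding fin_open_graph_def by blast
qed

end
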